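(* Let $A$ and $Z$ be $n\times n$ complex matrices with $A$ positive semidefinite and $Z$ positive definite with largest eigenvalue $a$ and smallest eigenvalue $b$. Then $$\Vert AZ\Vert_\infty \le \frac{a+b}{2\sqrt{ab}}\,\rho(AZ) \quad\text{and}\quad \Vert AZ\Vert_1 \le \frac{a+b}{2\sqrt{ab}}\,{\rm Tr}\,AZ.$$
   Context: $\Vert\cdot\Vert_\infty$ is the operator norm (largest singular value), $\Vert\cdot\Vert_1$ is the trace norm (sum of singular values), $\rho(\cdot)$ is the spectral radius, and ${\rm Tr}$ is the trace. *)

theory Defs
  imports "Jordan_Normal_Form.Spectral_Radius" "Jordan_Normal_Form.Schur_Decomposition"
begin

definition mat_trace :: "complex mat \<Rightarrow> complex" where
  "mat_trace A = (\<Sum>i<dim_row A. A $$ (i, i))"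

definition hermitian_mat :: "nat \<Rightarrow> complex mat \<Rightarrow> bool" where
  "hermitian_mat n A \<longleftrightarrow> A \<in> carrier_mat n n \<and> mat_adjoint A = A"

definition psd_mat :: "nat \<Rightarrow> complex mat \<Rightarrow> bool" where
  "psd_mat n A \<longleftrightarrow> hermitian_mat n A \<and>
     (\<forall>v \<in> carrier_vec n. 0 \<le> Re (conjugate v \<bullet> (A *\<^sub>v v)))"

definition pd_mat :: "nat \<Rightarrow> complex mat \<Rightarrow> bool" where
  "pd_mat n A \<longleftrightarrow> hermitian_mat n A \<and>
     (\<forall>v \<in> carrier_vec n. v \<noteq> 0\<^sub>v n \<longrightarrow> 0 < Re (conjugate v \<bullet> (A *\<^sub>v v)))"

text \<open>Singular values: square roots of the eigenvalues of A^* A (counted with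
  algebraic multiplicity in the trace norm).\<close>
definition op_norm :: "complex mat \<Rightarrow> real" where
  "op_norm A = sqrt (Max (Re ` spectrum (mat_adjoint A * A)))"

definition trace_norm :: "complex mat \<Rightarrow> real" where
  "trace_norm A = (\<Sum>e\<in>spectrum (mat_adjoint A * A).
      real (order e (char_poly (mat_adjoint A * A))) * sqrt (Re e))"

end

(*
  Write A = W^2 with W Hermitian. Since the spectrum of Z lies in [b, a], the operator inequality
  Z^2 <= (a + b) Z - a b I holds.

  Operator norm: ||A Z|| = ||(A Z)^*||, and (A Z)^* y = Z w with w = A y. Then
  |Z w|^2 <= (a + b) <Z w, w> - a b |w|^2, and <Z w, w> <= l <A y, y>, where l is the largest
  eigenvalue of W Z W. As l is also an eigenvalue of A Z, |l| <= rho(A Z). Maximising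
  (a + b) l t - a b t^2 over the eigenvalues t of A gives ||A Z||^2 <= ((a + b) rho)^2 / (4 a b).

  Trace norm: a polar factor P of A Z and an eigenbasis V of (A Z)^* (A Z) give
  ||A Z||_1 = Tr (W P)^* (W Z V). AM-GM with weight sqrt (a b) bounds this by Tr (P^* A P) <= Tr A
  and Tr (Z A Z) <= (a + b) Tr (A Z) - a b Tr A, and the Tr A terms cancel.
*)

theory Submission
  imports Defs
begin

section \<open>Adjoints, vector norms and unitary matrices\<close>

lemma dim_mat_adjoint [simp]:
  "dim_row (mat_adjoint A) = dim_col A" "dim_col (mat_adjoint A) = dim_row A"
  unfolding mat_adjoint_def by auto

lemma mat_adjoint_carrier [simp]: "A \<in> carrier_mat n m \<Longrightarrow> mat_adjoint A \<in> carrier_mat m n"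
  by (metis dim_mat_adjoint carrier_matD carrier_matI)

lemma index_mat_adjoint [simp]:
  fixes A :: "complex mat"
  shows "i < dim_col A \<Longrightarrow> j < dim_row A \<Longrightarrow> mat_adjoint A $$ (i, j) = cnj (A $$ (j, i))"
  unfolding mat_adjoint_def by (auto simp: mat_of_rows_def)

lemma row_mat_adjoint:
  fixes A :: "complex mat"
  shows "i < dim_col A \<Longrightarrow> row (mat_adjoint A) i = conjugate (col A i)"
  by (rule eq_vecI) auto

lemma mat_adjoint_mult:
  fixes A B :: "complex mat"
  assumes "A \<in> carrier_mat n k" "B \<in> carrier_mat k m"
  shows "mat_adjoint (A * B) = mat_adjoint B * mat_adjoint A"
  by (rule eq_matI) (use assms in \<open>auto simp: scalar_prod_def cnj_sum mult.commute\<close>)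

lemma mat_adjoint_adjoint [simp]: "mat_adjoint (mat_adjoint A) = (A :: complex mat)"
  by (rule eq_matI) auto

lemma mat_adjoint_one [simp]: "mat_adjoint (1\<^sub>m n) = (1\<^sub>m n :: complex mat)"
  by (rule eq_matI) auto

lemma mat_adjoint_minus:
  fixes A B :: "complex mat"
  assumes "A \<in> carrier_mat n m" "B \<in> carrier_mat n m"
  shows "mat_adjoint (A - B) = mat_adjoint A - mat_adjoint B"
  by (rule eq_matI) (use assms in auto)

definition sq_norm :: "complex vec \<Rightarrow> real" where
  "sq_norm v = (\<Sum>i<dim_vec v. (cmod (v $ i))\<^sup>2)"

lemma sq_norm_nonneg: "sq_norm v \<ge> 0"
  unfolding sq_norm_def by (simp add: sum_nonneg)

lemma cscalar_prod_self: "v \<bullet>c v = complex_of_real (sq_norm v)"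
proof -
  have "v \<bullet>c v = (\<Sum>i<dim_vec v. v $ i * cnj (v $ i))"
    by (simp add: scalar_prod_def lessThan_atLeast0)
  also have "\<dots> = complex_of_real (sq_norm v)"
    unfolding sq_norm_def of_real_sum by (simp only: complex_norm_square)
  finally show ?thesis .
qed

lemma conjugate_scalar_prod_self: "conjugate v \<bullet> v = complex_of_real (sq_norm v)"
proof -
  have "conjugate v \<bullet> v = v \<bullet>c v"
    by (rule conjugate_vec_sprod_comm[symmetric]; rule carrier_vecI, rule refl)
  then show ?thesis by (simp only: cscalar_prod_self)
qed

lemma sq_norm_zero_vec [simp]: "sq_norm (0\<^sub>v n) = 0"
  by (simp add: sq_norm_def)

lemma sq_norm_pos:
  assumes "v \<in> carrier_vec n" "v \<noteq> 0\<^sub>v n"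
  shows "sq_norm v > 0"
  using conjugate_square_eq_0_vec[OF assms(1)] assms(2) sq_norm_nonneg[of v]
  by (auto simp: cscalar_prod_self)

definition normalize_vec :: "complex vec \<Rightarrow> complex vec" where
  "normalize_vec v = complex_of_real (1 / sqrt (sq_norm v)) \<cdot>\<^sub>v v"

lemma normalize_vec_carrier [simp]: "v \<in> carrier_vec n \<Longrightarrow> normalize_vec v \<in> carrier_vec n"
  unfolding normalize_vec_def by simp

lemma cscalar_prod_normalize_vec:
  assumes "v \<in> carrier_vec n" "w \<in> carrier_vec n"
  shows "normalize_vec v \<bullet>c normalize_vec w
    = complex_of_real (1 / (sqrt (sq_norm v) * sqrt (sq_norm w))) * (v \<bullet>c w)"
  using assms by (simp add: normalize_vec_def conjugate_smult_vec)

lemma sq_norm_normalize_vec: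
  assumes "v \<in> carrier_vec n" "v \<noteq> 0\<^sub>v n"
  shows "sq_norm (normalize_vec v) = 1"
proof -
  have "complex_of_real (sqrt (sq_norm v)) * complex_of_real (sqrt (sq_norm v))
    = complex_of_real (sq_norm v)"
    unfolding of_real_mult[symmetric] using sq_norm_pos[OF assms] by simp
  then have "normalize_vec v \<bullet>c normalize_vec v = 1"
    unfolding cscalar_prod_normalize_vec[OF assms(1) assms(1)] cscalar_prod_self[of v]
    using sq_norm_pos[OF assms] by (simp add: field_simps)
  then show ?thesis by (simp add: cscalar_prod_self)
qed

lemma normalize_unit_vec: "sq_norm v = 1 \<Longrightarrow> normalize_vec v = v"
  unfolding normalize_vec_def by simp

lemma orthonormal_normalize_vec:
  assumes ws: "set ws \<subseteq> carrier_vec n" "corthogonal ws"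
    and i: "i < length ws" and j: "j < length ws"
  shows "normalize_vec (ws ! i) \<bullet>c normalize_vec (ws ! j) = (if i = j then 1 else 0)"
proof (cases "i = j")
  case True
  have car: "ws ! i \<in> carrier_vec n" using ws(1) i by auto
  have "ws ! i \<noteq> 0\<^sub>v n"
    using corthogonalD[OF ws(2) i i] by (auto simp: cscalar_prod_self)
  then show ?thesis
    using True sq_norm_normalize_vec[OF car] by (simp add: cscalar_prod_self)
next
  case False
  have "ws ! i \<in> carrier_vec n" "ws ! j \<in> carrier_vec n" using ws(1) i j by auto
  then show ?thesis
    using False corthogonalD[OF ws(2) i j] by (simp add: cscalar_prod_normalize_vec)
qed

definition unitary_mat :: "nat \<Rightarrow> complex mat \<Rightarrow> bool" where
  "unitary_mat n U \<longleftrightarrow>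
     U \<in> carrier_mat n n \<and> mat_adjoint U * U = 1\<^sub>m n \<and> U * mat_adjoint U = 1\<^sub>m n"

lemma unitary_matI:
  assumes "U \<in> carrier_mat n n" "mat_adjoint U * U = 1\<^sub>m n"
  shows "unitary_mat n U"
  using assms mat_mult_left_right_inverse[of "mat_adjoint U" n U] unfolding unitary_mat_def by auto

lemma unitary_mat_mult:
  assumes U: "unitary_mat n U" and V: "unitary_mat n V"
  shows "unitary_mat n (U * V)"
proof (rule unitary_matI)
  have carr: "U \<in> carrier_mat n n" "V \<in> carrier_mat n n"
    and inv: "mat_adjoint U * U = 1\<^sub>m n" "mat_adjoint V * V = 1\<^sub>m n"
    using U V unfolding unitary_mat_def by auto
  have "mat_adjoint (U * V) * (U * V) = mat_adjoint V * ((mat_adjoint U * U) * V)"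
    using carr by (simp add: mat_adjoint_mult[of U n n V n] assoc_mult_mat[of _ n n _ n _ n])
  then show "mat_adjoint (U * V) * (U * V) = 1\<^sub>m n"
    using carr inv by simp
qed (use U V in \<open>auto simp: unitary_mat_def\<close>)

lemma unitary_mat_of_cols:
  assumes ws: "set ws \<subseteq> carrier_vec n" "length ws = n"
    and orth: "\<And>i j. i < n \<Longrightarrow> j < n \<Longrightarrow> ws ! j \<bullet>c ws ! i = (if i = j then 1 else 0)"
  shows "unitary_mat n (mat_of_cols n ws)"
proof (rule unitary_matI)
  let ?W = "mat_of_cols n ws"
  show W: "?W \<in> carrier_mat n n" using ws by auto
  show "mat_adjoint ?W * ?W = 1\<^sub>m n"
  proof (rule eq_matI)
    fix i j assume "i < dim_row (1\<^sub>m n :: complex mat)" "j < dim_col (1\<^sub>m n :: complex mat)"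
    then have i: "i < n" and j: "j < n" by auto
    have c: "ws ! i \<in> carrier_vec n" "ws ! j \<in> carrier_vec n" using ws i j by auto
    have "(mat_adjoint ?W * ?W) $$ (i, j) = conjugate (ws ! i) \<bullet> ws ! j"
      using W ws i j c by (simp add: row_mat_adjoint)
    also have "\<dots> = ws ! j \<bullet>c ws ! i"
      by (rule comm_scalar_prod[OF carrier_vec_conjugate[OF c(1)] c(2)])
    finally show "(mat_adjoint ?W * ?W) $$ (i, j) = 1\<^sub>m n $$ (i, j)"
      using orth[OF i j] i j by simp
  qed (use W in auto)
qed

lemma unitary_mat_with_first_col:
  assumes v: "v \<in> carrier_vec n" and unit: "sq_norm v = 1"
  shows "\<exists>W. unitary_mat n W \<and> col W 0 = v"
proof -
  interpret cof_vec_space n "TYPE(complex)" .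
  have v0: "v \<noteq> 0\<^sub>v n" using unit by auto
  then have n0: "n \<noteq> 0" using v by auto
  define bs where "bs = basis_completion v"
  from basis_completion[OF v v0, folded bs_def]
  have bs: "set bs \<subseteq> carrier_vec n" "distinct bs" "\<not> lin_dep (set bs)" "hd bs = v"
    "length bs = n" by auto
  with n0 obtain vs where bv: "bs = v # vs" by (cases bs) auto
  define ws where "ws = gram_schmidt n bs"
  from gram_schmidt_result[OF bs(1,2,3) refl, folded ws_def] bs(5)
  have ws: "set ws \<subseteq> carrier_vec n" "corthogonal ws" "length ws = n" by auto
  have "ws \<noteq> []" using ws(3) n0 by auto
  then have hd_ws: "ws ! 0 = v"
    using gram_schmidt_hd[OF v, of vs] unfolding ws_def bv[symmetric] by (simp add: hd_conv_nth)
  have "unitary_mat n (mat_of_cols n (map normalize_vec ws))"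
    by (rule unitary_mat_of_cols) (use ws orthonormal_normalize_vec[OF ws(1,2)] in auto)
  moreover have "col (mat_of_cols n (map normalize_vec ws)) 0 = v"
    using ws n0 hd_ws normalize_unit_vec[OF unit] v by simp
  ultimately show ?thesis by blast
qed

section \<open>Unitary Schur decomposition\<close>

lemma unitary_conj_first_col_eigen:
  assumes A: "(A :: complex mat) \<in> carrier_mat n n" and n: "n > 0"
  shows "\<exists>W e. unitary_mat n W \<and> col (mat_adjoint W * A * W) 0 = e \<cdot>\<^sub>v unit_vec n 0"
proof -
  obtain e where "eigenvalue A e"
    using spectrum_non_empty[OF A n] unfolding spectrum_def by auto
  define u where "u = find_eigenvector A e"
  from find_eigenvector[OF A \<open>eigenvalue A e\<close>, folded u_def]
  have u: "u \<in> carrier_vec n" "u \<noteq> 0\<^sub>v n" "A *\<^sub>v u = e \<cdot>\<^sub>v u"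
    using A unfolding eigenvector_def by auto
  define v where "v = normalize_vec u"
  have v: "v \<in> carrier_vec n" "sq_norm v = 1"
    unfolding v_def using u sq_norm_normalize_vec[OF u(1,2)] by auto
  have Av: "A *\<^sub>v v = e \<cdot>\<^sub>v v"
    unfolding v_def normalize_vec_def using A u by (simp add: mult_mat_vec smult_smult_assoc mult.commute)
  obtain W where W: "unitary_mat n W" and W0: "col W 0 = v"
    using unitary_mat_with_first_col[OF v] by blast
  have Wc: "W \<in> carrier_mat n n" and WW: "mat_adjoint W * W = 1\<^sub>m n"
    using W unfolding unitary_mat_def by auto
  have "col (mat_adjoint W * A * W) 0 = (mat_adjoint W * A) *\<^sub>v col W 0"
    using A Wc n by (intro col_mult2) auto
  also have "\<dots> = mat_adjoint W *\<^sub>v (A *\<^sub>v v)"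
    unfolding W0 using A Wc v by (intro assoc_mult_mat_vec[of _ n n _ n]) auto
  also have "\<dots> = e \<cdot>\<^sub>v (mat_adjoint W *\<^sub>v col W 0)"
    unfolding Av W0 using Wc v by (intro mult_mat_vec[of _ n n]) auto
  also have "mat_adjoint W *\<^sub>v col W 0 = col (mat_adjoint W * W) 0"
    using Wc n by (intro col_mult2[symmetric]) auto
  finally show ?thesis unfolding WW using W n by auto
qed

lemma split_block_first_col:
  fixes A :: "complex mat"
  assumes A: "A \<in> carrier_mat (Suc k) (Suc k)" and col0: "col A 0 = e \<cdot>\<^sub>v unit_vec (Suc k) 0"
  shows "\<exists>A2 A3. A2 \<in> carrier_mat 1 k \<and> A3 \<in> carrier_mat k k
    \<and> A = four_block_mat (mat 1 1 (\<lambda>_. e)) A2 (0\<^sub>m k 1) A3"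
proof -
  obtain A1 A2 A0 A3 where split: "split_block A 1 1 = (A1, A2, A0, A3)"
    by (cases "split_block A 1 1") auto
  have dims: "dim_row A = 1 + k" "dim_col A = 1 + k" using A by auto
  note blocks = split_block[OF split dims]
  have "A1 = mat 1 1 (\<lambda>_. e)"
    using split arg_cong[OF col0, of "\<lambda>w. w $ 0"] A by (auto simp: split_block_def Let_def)
  moreover have "A0 = 0\<^sub>m k 1"
  proof -
    have "A $$ (Suc i, 0) = 0" if "i < k" for i
      using arg_cong[OF col0, of "\<lambda>w. w $ Suc i"] A that by auto
    then show ?thesis using split A by (auto simp: split_block_def Let_def)
  qed
  ultimately show ?thesis using blocks by blast
qed

lemma mat_adjoint_block_diag:
  fixes U :: "complex mat"
  assumes "U \<in> carrier_mat m m"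
  shows "mat_adjoint (four_block_mat (1\<^sub>m 1) (0\<^sub>m 1 m) (0\<^sub>m m 1) U)
       = four_block_mat (1\<^sub>m 1) (0\<^sub>m 1 m) (0\<^sub>m m 1) (mat_adjoint U)"
  by (rule eq_matI) (use assms in auto)

lemma unitary_schur_block_step:
  fixes A2 :: "complex mat"
  assumes A2: "A2 \<in> carrier_mat 1 k" and U3: "unitary_mat k U3"
    and B3: "B3 \<in> carrier_mat k k" "upper_triangular B3"
  shows "\<exists>P C. unitary_mat (Suc k) P \<and> C \<in> carrier_mat (Suc k) (Suc k) \<and> upper_triangular C
    \<and> four_block_mat (mat 1 1 (\<lambda>_. e)) A2 (0\<^sub>m k 1) (U3 * B3 * mat_adjoint U3) = P * C * mat_adjoint P"
proof -
  let ?A1 = "mat 1 1 (\<lambda>_. e) :: complex mat"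
  have A1: "?A1 \<in> carrier_mat 1 1" by simp
  have U3c: "U3 \<in> carrier_mat k k" and U3U3: "mat_adjoint U3 * U3 = 1\<^sub>m k"
    "U3 * mat_adjoint U3 = 1\<^sub>m k"
    using U3 unfolding unitary_mat_def by auto
  have A3: "U3 * B3 * mat_adjoint U3 \<in> carrier_mat k k" using U3c B3 by auto
  have sim3: "similar_mat_wit (U3 * B3 * mat_adjoint U3) B3 U3 (mat_adjoint U3)"
    unfolding similar_mat_wit_def Let_def using A3 B3 U3c U3U3 by auto
  have UR: "A2 = 1\<^sub>m 1 * (A2 * U3) * mat_adjoint U3"
    using A2 U3c U3U3 by (simp add: assoc_mult_mat[of A2 1 k U3 k _ k])
  have LL: "0\<^sub>m k 1 = U3 * 0\<^sub>m k 1 * 1\<^sub>m 1" using U3c by auto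
  define P where "P = four_block_mat (1\<^sub>m 1) (0\<^sub>m 1 k) (0\<^sub>m k 1) U3"
  define C where "C = four_block_mat ?A1 (A2 * U3) (0\<^sub>m k 1) B3"
  have "similar_mat_wit (four_block_mat ?A1 A2 (0\<^sub>m k 1) (U3 * B3 * mat_adjoint U3)) C P
    (four_block_mat (1\<^sub>m 1) (0\<^sub>m 1 k) (0\<^sub>m k 1) (mat_adjoint U3))"
    unfolding P_def C_def
    by (rule similar_mat_wit_four_block[OF similar_mat_wit_refl[OF A1] sim3 UR LL A1 A3])
      (use A2 U3c in auto)
  then have sim: "similar_mat_wit (four_block_mat ?A1 A2 (0\<^sub>m k 1) (U3 * B3 * mat_adjoint U3)) C P
    (mat_adjoint P)"
    unfolding P_def mat_adjoint_block_diag[OF U3c] .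
  have "four_block_mat ?A1 A2 (0\<^sub>m k 1) (U3 * B3 * mat_adjoint U3) \<in> carrier_mat (Suc k) (Suc k)"
    using four_block_carrier_mat[OF A1 A3] by simp
  note simD = similar_mat_witD2[OF this sim]
  have "unitary_mat (Suc k) P" using simD(1,2,6) unfolding unitary_mat_def by auto
  moreover have "upper_triangular C"
    unfolding C_def by (rule upper_triangular_four_block[OF _ B3(1) _ B3(2)]) auto
  ultimately show ?thesis using simD(3,5) by blast
qed

text \<open>Unlike \<^const>\<open>schur_decomposition\<close> of the library, whose Gram--Schmidt basis is not
  normalised, the similarity here is unitary.\<close>

theorem complex_unitary_schur:
  assumes "(A :: complex mat) \<in> carrier_mat n n"
  shows "\<exists>U B. unitary_mat n U \<and> B \<in> carrier_mat n n \<and> upper_triangular B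
    \<and> A = U * B * mat_adjoint U"
  using assms
proof (induction n arbitrary: A)
  case 0
  then have "A = 1\<^sub>m 0 * A * mat_adjoint (1\<^sub>m 0)" by (intro eq_matI) auto
  moreover have "unitary_mat 0 (1\<^sub>m 0)" "upper_triangular A"
    using 0 by (auto simp: unitary_mat_def upper_triangular_def)
  ultimately show ?case using 0 by blast
next
  case (Suc k A)
  let ?n = "Suc k"
  obtain W e where W: "unitary_mat ?n W" and col0: "col (mat_adjoint W * A * W) 0 = e \<cdot>\<^sub>v unit_vec ?n 0"
    using unitary_conj_first_col_eigen[OF Suc.prems] by blast
  have Wc: "W \<in> carrier_mat ?n ?n" and WW': "W * mat_adjoint W = 1\<^sub>m ?n"
    using W unfolding unitary_mat_def by auto
  have A': "mat_adjoint W * A * W \<in> carrier_mat ?n ?n" using Suc.prems Wc by auto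
  obtain A2 A3 where A2: "A2 \<in> carrier_mat 1 k" and A3: "A3 \<in> carrier_mat k k"
    and blocks: "mat_adjoint W * A * W = four_block_mat (mat 1 1 (\<lambda>_. e)) A2 (0\<^sub>m k 1) A3"
    using split_block_first_col[OF A' col0] by blast
  obtain U3 B3 where U3: "unitary_mat k U3" and B3: "B3 \<in> carrier_mat k k" "upper_triangular B3"
    and A3_eq: "A3 = U3 * B3 * mat_adjoint U3"
    using Suc.IH[OF A3] by blast
  obtain P C where P: "unitary_mat ?n P" and C: "C \<in> carrier_mat ?n ?n" "upper_triangular C"
    and PC: "mat_adjoint W * A * W = P * C * mat_adjoint P"
    using unitary_schur_block_step[OF A2 U3 B3, of e] unfolding blocks A3_eq by blast
  have Pc: "P \<in> carrier_mat ?n ?n" using P unfolding unitary_mat_def by auto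
  have "A = (W * mat_adjoint W) * A * (W * mat_adjoint W)" unfolding WW' using Suc.prems by simp
  also have "\<dots> = W * (mat_adjoint W * A * W) * mat_adjoint W"
    using Suc.prems Wc
    by (simp add: assoc_mult_mat[of _ ?n ?n _ ?n _ ?n] mult_carrier_mat[of _ ?n ?n])
  also have "\<dots> = (W * P) * C * mat_adjoint (W * P)"
    unfolding PC using Wc Pc C
    by (simp add: mat_adjoint_mult[of W ?n ?n P ?n] assoc_mult_mat[of _ ?n ?n _ ?n _ ?n]
        mult_carrier_mat[of _ ?n ?n])
  finally show ?case using unitary_mat_mult[OF W P] C by blast
qed

section \<open>Spectral decomposition of Hermitian matrices\<close>

definition real_diag_mat :: "nat \<Rightarrow> (nat \<Rightarrow> real) \<Rightarrow> complex mat" where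
  "real_diag_mat n d = mat n n (\<lambda>(i, j). if i = j then complex_of_real (d i) else 0)"

lemma real_diag_mat_carrier [simp]: "real_diag_mat n d \<in> carrier_mat n n"
  unfolding real_diag_mat_def by auto

lemma index_real_diag_mat [simp]:
  "i < n \<Longrightarrow> j < n \<Longrightarrow> real_diag_mat n d $$ (i, j) = (if i = j then complex_of_real (d i) else 0)"
  "dim_row (real_diag_mat n d) = n" "dim_col (real_diag_mat n d) = n"
  unfolding real_diag_mat_def by auto

lemma real_diag_mat_cong:
  "(\<And>i. i < n \<Longrightarrow> d i = e i) \<Longrightarrow> real_diag_mat n d = real_diag_mat n e"
  by (rule eq_matI) auto

lemma real_diag_mat_mult: "real_diag_mat n d * real_diag_mat n e = real_diag_mat n (\<lambda>i. d i * e i)"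
proof (rule eq_matI)
  fix i j assume "i < dim_row (real_diag_mat n (\<lambda>i. d i * e i))"
    "j < dim_col (real_diag_mat n (\<lambda>i. d i * e i))"
  then have i: "i < n" and j: "j < n" by auto
  have "(real_diag_mat n d * real_diag_mat n e) $$ (i, j)
    = (\<Sum>k\<in>{0..<n}. real_diag_mat n d $$ (i, k) * real_diag_mat n e $$ (k, j))"
    using i j by (simp add: scalar_prod_def)
  also have "\<dots> = (\<Sum>k\<in>{0..<n}. if k = i then real_diag_mat n d $$ (i, k) * real_diag_mat n e $$ (k, j) else 0)"
    using i j by (intro sum.cong) auto
  finally show "(real_diag_mat n d * real_diag_mat n e) $$ (i, j) = real_diag_mat n (\<lambda>i. d i * e i) $$ (i, j)"
    using i j by simp
qed auto

lemma mat_adjoint_real_diag_mat [simp]: "mat_adjoint (real_diag_mat n d) = real_diag_mat n d"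
  by (rule eq_matI) auto

lemma upper_triangular_real_diag_mat: "upper_triangular (real_diag_mat n d)"
  unfolding upper_triangular_def by simp

lemma char_poly_real_diag_mat:
  "char_poly (real_diag_mat n d) = (\<Prod>i<n. [:- complex_of_real (d i), 1:])"
proof -
  have "diag_mat (real_diag_mat n d) = map (\<lambda>i. complex_of_real (d i)) [0..<n]"
    by (rule nth_equalityI) (auto simp: diag_mat_def)
  then show ?thesis
    using char_poly_upper_triangular[OF real_diag_mat_carrier upper_triangular_real_diag_mat,
        of n d]
    by (simp add: prod.distinct_set_conv_list[symmetric] comp_def lessThan_atLeast0)
qed

definition quad_form :: "complex mat \<Rightarrow> complex vec \<Rightarrow> complex" where
  "quad_form M v = conjugate v \<bullet> (M *\<^sub>v v)"

lemma conjugate_scalar_prod_mat_adjoint: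
  fixes A :: "complex mat"
  assumes A: "A \<in> carrier_mat n n" and v: "v \<in> carrier_vec n" and w: "w \<in> carrier_vec n"
  shows "conjugate v \<bullet> (A *\<^sub>v w) = conjugate (mat_adjoint A *\<^sub>v v) \<bullet> w"
proof -
  have "conjugate v \<bullet> (A *\<^sub>v w) = (\<Sum>i<n. \<Sum>j<n. cnj (v $ i) * A $$ (i, j) * w $ j)"
    using A v w by (auto simp: scalar_prod_def lessThan_atLeast0 sum_distrib_left mult.assoc)
  also have "\<dots> = (\<Sum>j<n. \<Sum>i<n. cnj (v $ i) * A $$ (i, j) * w $ j)"
    by (rule sum.swap)
  also have "\<dots> = conjugate (mat_adjoint A *\<^sub>v v) \<bullet> w"
    using A v w by (auto simp: scalar_prod_def lessThan_atLeast0 cnj_sum sum_distrib_left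
        mult.commute mult.left_commute)
  finally show ?thesis .
qed

lemma quad_form_conj:
  fixes R :: "complex mat"
  assumes R: "R \<in> carrier_mat n n" and M: "M \<in> carrier_mat n n" and v: "v \<in> carrier_vec n"
  shows "quad_form (mat_adjoint R * M * R) v = quad_form M (R *\<^sub>v v)"
proof -
  have "mat_adjoint R * M * R *\<^sub>v v = (mat_adjoint R * M) *\<^sub>v (R *\<^sub>v v)"
    using R M v by (intro assoc_mult_mat_vec[of _ n n _ n]) auto
  also have "\<dots> = mat_adjoint R *\<^sub>v (M *\<^sub>v (R *\<^sub>v v))"
    using R M v by (intro assoc_mult_mat_vec[of _ n n _ n]) auto
  finally show ?thesis
    unfolding quad_form_def
    using conjugate_scalar_prod_mat_adjoint[of "mat_adjoint R" n v "M *\<^sub>v (R *\<^sub>v v)"] R M v by simp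
qed

lemma quad_form_adjoint_mult:
  assumes "R \<in> carrier_mat n n" "v \<in> carrier_vec n"
  shows "quad_form (mat_adjoint R * R) v = complex_of_real (sq_norm (R *\<^sub>v v))"
  using quad_form_conj[OF assms(1) one_carrier_mat assms(2)] assms
  by (simp add: quad_form_def conjugate_scalar_prod_self)

lemma quad_form_real_diag_mat:
  assumes "y \<in> carrier_vec n"
  shows "quad_form (real_diag_mat n d) y = complex_of_real (\<Sum>i<n. d i * (cmod (y $ i))\<^sup>2)"
proof -
  have "real_diag_mat n d *\<^sub>v y = vec n (\<lambda>i. complex_of_real (d i) * y $ i)"
  proof (rule eq_vecI)
    fix i assume "i < dim_vec (vec n (\<lambda>i. complex_of_real (d i) * y $ i))"
    then have i: "i < n" by simp
    have "(real_diag_mat n d *\<^sub>v y) $ i = (\<Sum>k\<in>{0..<n}. real_diag_mat n d $$ (i, k) * y $ k)"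
      using i assms by (simp add: scalar_prod_def)
    also have "\<dots> = (\<Sum>k\<in>{0..<n}. if k = i then real_diag_mat n d $$ (i, k) * y $ k else 0)"
      using i by (intro sum.cong) auto
    finally have "(real_diag_mat n d *\<^sub>v y) $ i
      = (\<Sum>k\<in>{0..<n}. if k = i then real_diag_mat n d $$ (i, k) * y $ k else 0)" .
    then show "(real_diag_mat n d *\<^sub>v y) $ i = vec n (\<lambda>i. complex_of_real (d i) * y $ i) $ i"
      using i by simp
  qed simp
  then have "quad_form (real_diag_mat n d) y
    = (\<Sum>i<n. complex_of_real (d i) * (y $ i * cnj (y $ i)))"
    unfolding quad_form_def using assms
    by (auto simp: scalar_prod_def lessThan_atLeast0 mult.commute mult.left_commute)
  then show ?thesis by (simp only: complex_norm_square[symmetric] of_real_mult[symmetric] of_real_sum)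
qed

lemma hermitian_mat_conj:
  assumes R: "R \<in> carrier_mat n n" and M: "hermitian_mat n M"
  shows "hermitian_mat n (mat_adjoint R * M * R)"
proof -
  have Mc: "M \<in> carrier_mat n n" and adjM: "mat_adjoint M = M"
    using M unfolding hermitian_mat_def by auto
  have "mat_adjoint (mat_adjoint R * M * R) = mat_adjoint R * mat_adjoint (mat_adjoint R * M)"
    using R Mc by (intro mat_adjoint_mult[of _ n n _ n]) auto
  also have "\<dots> = mat_adjoint R * M * R"
    using R Mc by (simp add: mat_adjoint_mult[of _ n n M n] adjM assoc_mult_mat[of _ n n _ n _ n])
  finally show ?thesis using R Mc unfolding hermitian_mat_def by auto
qed

definition spectral_decomp :: "nat \<Rightarrow> complex mat \<Rightarrow> complex mat \<Rightarrow> (nat \<Rightarrow> real) \<Rightarrow> bool" where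
  "spectral_decomp n M U d \<longleftrightarrow> unitary_mat n U \<and> M = U * real_diag_mat n d * mat_adjoint U"

lemma hermitian_upper_triangular_eq_real_diag_mat:
  fixes B :: "complex mat"
  assumes B: "B \<in> carrier_mat n n" and adjB: "mat_adjoint B = B" and ut: "upper_triangular B"
  shows "B = real_diag_mat n (\<lambda>i. Re (B $$ (i, i)))"
proof (rule eq_matI)
  fix i j assume "i < dim_row (real_diag_mat n (\<lambda>i. Re (B $$ (i, i))))"
    "j < dim_col (real_diag_mat n (\<lambda>i. Re (B $$ (i, i))))"
  then have i: "i < n" and j: "j < n" by auto
  have sym: "B $$ (i, j) = cnj (B $$ (j, i))"
    using arg_cong[OF adjB, of "\<lambda>X. X $$ (i, j)"] B i j by simp
  consider "i = j" | "j < i" | "i < j" by linarith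
  then show "B $$ (i, j) = real_diag_mat n (\<lambda>i. Re (B $$ (i, i))) $$ (i, j)"
  proof cases
    case 1
    then show ?thesis using sym i by (simp add: complex_eq_iff)
  next
    case 2
    then show ?thesis using ut i j B by (auto simp: upper_triangular_def)
  next
    case 3
    then show ?thesis using ut sym i j B by (auto simp: upper_triangular_def)
  qed
qed (use B in auto)

theorem hermitian_spectral_decomp:
  assumes "hermitian_mat n M"
  shows "\<exists>U d. spectral_decomp n M U d"
proof -
  have M: "M \<in> carrier_mat n n" and adjM: "mat_adjoint M = M"
    using assms unfolding hermitian_mat_def by auto
  obtain U B where U: "unitary_mat n U" and B: "B \<in> carrier_mat n n"
    and ut: "upper_triangular B" and MB: "M = U * B * mat_adjoint U"
    using complex_unitary_schur[OF M] by blast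
  have Uc: "U \<in> carrier_mat n n" and UU: "mat_adjoint U * U = 1\<^sub>m n"
    using U unfolding unitary_mat_def by auto
  have "mat_adjoint U * M * U = (mat_adjoint U * U) * B * (mat_adjoint U * U)"
    unfolding MB using Uc B
    by (simp add: assoc_mult_mat[of _ n n _ n _ n] mult_carrier_mat[of _ n n])
  then have BM: "B = mat_adjoint U * M * U" using B UU by simp
  have "mat_adjoint B = B"
    unfolding BM using Uc M
    by (simp add: mat_adjoint_mult[of _ n n _ n] adjM assoc_mult_mat[of _ n n _ n _ n])
  then have "B = real_diag_mat n (\<lambda>i. Re (B $$ (i, i)))"
    by (rule hermitian_upper_triangular_eq_real_diag_mat[OF B _ ut])
  then have "spectral_decomp n M U (\<lambda>i. Re (B $$ (i, i)))"
    using U MB unfolding spectral_decomp_def by simp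
  then show ?thesis by blast
qed

lemma spectral_decompD:
  assumes "spectral_decomp n M U d"
  shows "U \<in> carrier_mat n n" "mat_adjoint U * U = 1\<^sub>m n" "U * mat_adjoint U = 1\<^sub>m n"
    "M = U * real_diag_mat n d * mat_adjoint U" "M \<in> carrier_mat n n" "unitary_mat n U"
  using assms unfolding spectral_decomp_def unitary_mat_def by auto

lemma spectral_decomp_diag:
  assumes "spectral_decomp n M U d"
  shows "mat_adjoint U * M * U = real_diag_mat n d"
proof -
  note sd = spectral_decompD[OF assms]
  have "mat_adjoint U * M * U = (mat_adjoint U * U) * real_diag_mat n d * (mat_adjoint U * U)"
    unfolding sd(4) using sd(1)
    by (simp add: assoc_mult_mat[of _ n n _ n _ n] mult_carrier_mat[of _ n n])
  then show ?thesis using sd(2) by simp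
qed

lemma spectral_decomp_hermitian:
  assumes "spectral_decomp n M U d"
  shows "hermitian_mat n M"
proof -
  note sd = spectral_decompD[OF assms]
  have "mat_adjoint M = mat_adjoint (mat_adjoint U) * mat_adjoint (U * real_diag_mat n d)"
    unfolding sd(4) using sd(1) by (intro mat_adjoint_mult[of _ n n _ n]) auto
  also have "\<dots> = M"
    unfolding sd(4) using sd(1)
    by (simp add: mat_adjoint_mult[of U n n _ n] assoc_mult_mat[of _ n n _ n _ n])
  finally show ?thesis using sd(5) unfolding hermitian_mat_def by simp
qed

lemma spectral_decomp_square:
  assumes "spectral_decomp n M U d"
  shows "spectral_decomp n (M * M) U (\<lambda>i. (d i)\<^sup>2)"
proof -
  note sd = spectral_decompD[OF assms]
  have "M * M = U * (real_diag_mat n d * (mat_adjoint U * U) * real_diag_mat n d) * mat_adjoint U"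
    unfolding sd(4) using sd(1)
    by (simp add: assoc_mult_mat[of _ n n _ n _ n] mult_carrier_mat[of _ n n])
  also have "\<dots> = U * real_diag_mat n (\<lambda>i. (d i)\<^sup>2) * mat_adjoint U"
    unfolding sd(2) by (simp add: real_diag_mat_mult power2_eq_square)
  finally show ?thesis using assms unfolding spectral_decomp_def by blast
qed

lemma spectral_decomp_eigenvector:
  assumes sd: "spectral_decomp n M U d" and i: "i < n"
  shows "M *\<^sub>v col U i = complex_of_real (d i) \<cdot>\<^sub>v col U i" "sq_norm (col U i) = 1"
proof -
  note sd = spectral_decompD[OF sd]
  have "M * U = U * real_diag_mat n d"
    unfolding sd(4) using sd(1,2)
    by (simp add: assoc_mult_mat[of _ n n _ n _ n] mult_carrier_mat[of _ n n])
  then have "M *\<^sub>v col U i = col (U * real_diag_mat n d) i"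
    using sd(1,5) i by (metis col_mult2)
  also have "\<dots> = complex_of_real (d i) \<cdot>\<^sub>v col U i"
  proof (rule eq_vecI)
    fix j assume "j < dim_vec (complex_of_real (d i) \<cdot>\<^sub>v col U i)"
    then have j: "j < n" using sd(1) by auto
    have "col (U * real_diag_mat n d) i $ j = (\<Sum>k\<in>{0..<n}. U $$ (j, k) * real_diag_mat n d $$ (k, i))"
      using sd(1) i j by (simp add: scalar_prod_def)
    also have "\<dots> = (\<Sum>k\<in>{0..<n}. if k = i then U $$ (j, k) * real_diag_mat n d $$ (k, i) else 0)"
      using i by (intro sum.cong) auto
    finally show "col (U * real_diag_mat n d) i $ j = (complex_of_real (d i) \<cdot>\<^sub>v col U i) $ j"
      using sd(1) i j by (simp add: mult.commute)
  qed (use sd(1) i in auto)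
  finally show "M *\<^sub>v col U i = complex_of_real (d i) \<cdot>\<^sub>v col U i" .
  have "complex_of_real (sq_norm (col U i)) = (mat_adjoint U * U) $$ (i, i)"
    using sd(1) i by (simp add: row_mat_adjoint conjugate_scalar_prod_self)
  then show "sq_norm (col U i) = 1" using sd(2) i by simp
qed

lemma spectral_decomp_eigenvalue:
  assumes "spectral_decomp n M U d" "i < n"
  shows "complex_of_real (d i) \<in> spectrum M"
proof -
  note sd = spectral_decompD[OF assms(1)]
  have "col U i \<noteq> 0\<^sub>v n"
    using spectral_decomp_eigenvector(2)[OF assms] by auto
  then have "eigenvector M (col U i) (complex_of_real (d i))"
    unfolding eigenvector_def using spectral_decomp_eigenvector(1)[OF assms] sd(1,5) assms(2) by auto
  then show ?thesis unfolding spectrum_def eigenvalue_def by auto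
qed

lemma spectral_decomp_quad_form_col:
  assumes "spectral_decomp n M U d" "i < n"
  shows "quad_form M (col U i) = complex_of_real (d i)"
  unfolding quad_form_def spectral_decomp_eigenvector(1)[OF assms]
  using spectral_decompD(1)[OF assms(1)] assms(2) spectral_decomp_eigenvector(2)[OF assms]
  by (simp add: conjugate_scalar_prod_self)

lemma spectral_decomp_char_poly:
  assumes "spectral_decomp n M U d"
  shows "char_poly M = (\<Prod>i<n. [:- complex_of_real (d i), 1:])"
proof -
  note sd = spectral_decompD[OF assms]
  have "similar_mat_wit M (real_diag_mat n d) U (mat_adjoint U)"
    unfolding similar_mat_wit_def Let_def using sd by auto
  then have "similar_mat M (real_diag_mat n d)"
    unfolding similar_mat_def by blast
  then show ?thesis by (simp add: char_poly_similar char_poly_real_diag_mat)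
qed

lemma unitary_mat_sq_norm:
  assumes "unitary_mat n U" "v \<in> carrier_vec n"
  shows "sq_norm v = (\<Sum>i<n. (cmod ((mat_adjoint U *\<^sub>v v) $ i))\<^sup>2)"
proof -
  have U: "U \<in> carrier_mat n n" "U * mat_adjoint U = 1\<^sub>m n"
    using assms(1) unfolding unitary_mat_def by auto
  have "complex_of_real (sq_norm v) = quad_form (U * mat_adjoint U) v"
    unfolding U(2) quad_form_def using assms(2) by (simp add: conjugate_scalar_prod_self)
  also have "\<dots> = complex_of_real (sq_norm (mat_adjoint U *\<^sub>v v))"
    using quad_form_adjoint_mult[of "mat_adjoint U" n v] U assms(2) by simp
  finally have "sq_norm v = sq_norm (mat_adjoint U *\<^sub>v v)" by simp
  then show ?thesis using U by (simp add: sq_norm_def)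
qed

lemma spectral_decomp_quad_form:
  assumes "spectral_decomp n M U d" "v \<in> carrier_vec n"
  shows "Re (quad_form M v) = (\<Sum>i<n. d i * (cmod ((mat_adjoint U *\<^sub>v v) $ i))\<^sup>2)"
proof -
  note sd = spectral_decompD[OF assms(1)]
  have "quad_form M v = quad_form (mat_adjoint (mat_adjoint U) * real_diag_mat n d * mat_adjoint U) v"
    using sd(4) by simp
  also have "\<dots> = quad_form (real_diag_mat n d) (mat_adjoint U *\<^sub>v v)"
    using sd(1) assms(2) by (intro quad_form_conj) auto
  moreover have "mat_adjoint U *\<^sub>v v \<in> carrier_vec n"
    using sd(1) assms(2) by (metis mat_adjoint_carrier mult_mat_vec_carrier)
  ultimately show ?thesis by (simp only: quad_form_real_diag_mat Re_complex_of_real)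
qed

lemma psd_mat_sqrt:
  assumes "psd_mat n A"
  shows "\<exists>W. hermitian_mat n W \<and> W * W = A"
proof -
  obtain U d where sd: "spectral_decomp n A U d"
    using hermitian_spectral_decomp assms unfolding psd_mat_def by blast
  note sdD = spectral_decompD[OF sd]
  have d: "d i \<ge> 0" if "i < n" for i
  proof -
    have "col U i \<in> carrier_vec n" using sdD(1) that by auto
    then have "0 \<le> Re (quad_form A (col U i))"
      using assms unfolding psd_mat_def quad_form_def by auto
    then show ?thesis using spectral_decomp_quad_form_col[OF sd that] by simp
  qed
  define W where "W = U * real_diag_mat n (\<lambda>i. sqrt (d i)) * mat_adjoint U"
  have sdW: "spectral_decomp n W U (\<lambda>i. sqrt (d i))"
    using sd unfolding W_def spectral_decomp_def by auto
  have "W * W = U * real_diag_mat n (\<lambda>i. (sqrt (d i))\<^sup>2) * mat_adjoint U"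
    using spectral_decomp_square[OF sdW] unfolding spectral_decomp_def by auto
  also have "real_diag_mat n (\<lambda>i. (sqrt (d i))\<^sup>2) = real_diag_mat n d"
    by (rule real_diag_mat_cong) (simp add: d)
  finally have "W * W = A" using sdD(4) by simp
  then show ?thesis using spectral_decomp_hermitian[OF sdW] by blast
qed

lemma pd_mat_spectrum_pos:
  assumes Z: "pd_mat n Z" and e: "e \<in> spectrum Z"
  shows "Re e > 0"
proof -
  have "Z \<in> carrier_mat n n" using Z unfolding pd_mat_def hermitian_mat_def by auto
  moreover obtain v where "eigenvector Z v e" using e unfolding spectrum_def eigenvalue_def by auto
  ultimately have v: "v \<in> carrier_vec n" "v \<noteq> 0\<^sub>v n" "Z *\<^sub>v v = e \<cdot>\<^sub>v v"
    unfolding eigenvector_def by auto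
  have "0 < Re (conjugate v \<bullet> (Z *\<^sub>v v))" using Z v unfolding pd_mat_def by auto
  also have "conjugate v \<bullet> (Z *\<^sub>v v) = e * complex_of_real (sq_norm v)"
    unfolding v(3) using v(1) by (simp add: conjugate_scalar_prod_self)
  finally have "0 < Re e * sq_norm v" by simp
  then show ?thesis using sq_norm_nonneg[of v] by (simp add: zero_less_mult_iff)
qed

lemma hermitian_quad_form_le_eigenvalue:
  assumes "hermitian_mat n C" "n > 0"
  shows "\<exists>l. complex_of_real l \<in> spectrum C \<and> (\<forall>x\<in>carrier_vec n. Re (quad_form C x) \<le> l * sq_norm x)"
proof -
  obtain U g where sd: "spectral_decomp n C U g"
    using hermitian_spectral_decomp[OF assms(1)] by blast
  have "Max (g ` {..<n}) \<in> g ` {..<n}" using assms(2) by (intro Max_in) auto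
  then obtain k where k: "k < n" "g k = Max (g ` {..<n})" by auto
  have max: "g i \<le> g k" if "i < n" for i unfolding k(2) using that by (intro Max_ge) auto
  have "Re (quad_form C x) \<le> g k * sq_norm x" if x: "x \<in> carrier_vec n" for x
    unfolding spectral_decomp_quad_form[OF sd x] unitary_mat_sq_norm[OF spectral_decompD(6)[OF sd] x]
      sum_distrib_left
    by (intro sum_mono mult_right_mono) (use max in auto)
  then show ?thesis using spectral_decomp_eigenvalue[OF sd k(1)] by blast
qed

section \<open>Operator norm and trace norm\<close>

lemma spectrum_mult_swap:
  fixes B D :: "complex mat"
  assumes B: "B \<in> carrier_mat n n" and D: "D \<in> carrier_mat n n"
    and e: "e \<in> spectrum (B * D)" "e \<noteq> 0"
  shows "e \<in> spectrum (D * B)"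
proof -
  obtain u where "eigenvector (B * D) u e" using e unfolding spectrum_def eigenvalue_def by auto
  then have u: "u \<in> carrier_vec n" "u \<noteq> 0\<^sub>v n" "B *\<^sub>v (D *\<^sub>v u) = e \<cdot>\<^sub>v u"
    using B D unfolding eigenvector_def by auto
  have "(D * B) *\<^sub>v (D *\<^sub>v u) = e \<cdot>\<^sub>v (D *\<^sub>v u)"
    using B D u by (simp add: mult_mat_vec)
  moreover have "D *\<^sub>v u \<noteq> 0\<^sub>v n"
  proof
    assume Du: "D *\<^sub>v u = 0\<^sub>v n"
    have "B *\<^sub>v 0\<^sub>v n = 0\<^sub>v n" using B by (intro eq_vecI) auto
    then have eu: "e \<cdot>\<^sub>v u = 0\<^sub>v n" using u(3) by (simp add: Du)
    have "u = 0\<^sub>v n"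
    proof (rule eq_vecI)
      fix i assume i: "i < dim_vec (0\<^sub>v n :: complex vec)"
      then have "e * u $ i = 0" using arg_cong[OF eu, of "\<lambda>w. w $ i"] u(1) by simp
      then show "u $ i = 0\<^sub>v n $ i" using e(2) i by simp
    qed (use u(1) in simp)
    then show False using u(2) by simp
  qed
  ultimately have "eigenvector (D * B) (D *\<^sub>v u) e"
    unfolding eigenvector_def using B D u by auto
  then show ?thesis unfolding spectrum_def eigenvalue_def by auto
qed

text \<open>An eigenvector \<open>x\<close> of \<open>X\<^sup>* X\<close> yields the eigenvector \<open>X x\<close> of \<open>X X\<^sup>*\<close> with the same
  eigenvalue, so a bound on \<open>X\<^sup>*\<close> controls the spectrum of \<open>X\<^sup>* X\<close>.\<close>

lemma spectrum_adjoint_mult_le: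
  fixes X :: "complex mat"
  assumes X: "X \<in> carrier_mat n n" and \<kappa>: "\<kappa> \<ge> 0"
    and bound: "\<And>y. y \<in> carrier_vec n \<Longrightarrow> sq_norm (mat_adjoint X *\<^sub>v y) \<le> \<kappa> * sq_norm y"
    and e: "e \<in> spectrum (mat_adjoint X * X)"
  shows "Re e \<le> \<kappa>"
proof -
  obtain x where "eigenvector (mat_adjoint X * X) x e"
    using e unfolding spectrum_def eigenvalue_def by auto
  then have x: "x \<in> carrier_vec n" "x \<noteq> 0\<^sub>v n" and Mx: "(mat_adjoint X * X) *\<^sub>v x = e \<cdot>\<^sub>v x"
    unfolding eigenvector_def using X by auto
  define y where "y = X *\<^sub>v x"
  have y: "y \<in> carrier_vec n" unfolding y_def using X x by simp
  have "e * complex_of_real (sq_norm x) = quad_form (mat_adjoint X * X) x"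
    unfolding quad_form_def Mx using x by (simp add: conjugate_scalar_prod_self)
  also have "\<dots> = complex_of_real (sq_norm y)"
    unfolding y_def using quad_form_adjoint_mult[OF X x(1)] .
  finally have exy: "e * complex_of_real (sq_norm x) = complex_of_real (sq_norm y)" .
  have "(X * mat_adjoint X) *\<^sub>v y = X *\<^sub>v ((mat_adjoint X * X) *\<^sub>v x)"
    unfolding y_def using X x by (simp add: assoc_mult_mat_vec[of _ n n _ n])
  also have "\<dots> = e \<cdot>\<^sub>v y" unfolding Mx y_def using X x by (simp add: mult_mat_vec)
  finally have "quad_form (X * mat_adjoint X) y = e * complex_of_real (sq_norm y)"
    unfolding quad_form_def using y by (simp add: conjugate_scalar_prod_self)
  moreover have "quad_form (X * mat_adjoint X) y = complex_of_real (sq_norm (mat_adjoint X *\<^sub>v y))"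
    using quad_form_adjoint_mult[of "mat_adjoint X" n y] X y by simp
  ultimately have "complex_of_real (sq_norm (mat_adjoint X *\<^sub>v y)) = e * complex_of_real (sq_norm y)"
    by simp
  from arg_cong[where f = Re, OF this] have "Re e * sq_norm y \<le> \<kappa> * sq_norm y"
    using bound[OF y] by simp
  moreover have "sq_norm x > 0" using sq_norm_pos[OF x(1,2)] .
  ultimately show ?thesis
    using exy \<kappa> sq_norm_nonneg[of y]
    by (cases "sq_norm y = 0") (auto simp: complex_eq_iff)
qed

lemma op_norm_le_sqrt:
  fixes X :: "complex mat"
  assumes X: "X \<in> carrier_mat n n" and n: "n > 0" and \<kappa>: "\<kappa> \<ge> 0"
    and bound: "\<And>y. y \<in> carrier_vec n \<Longrightarrow> sq_norm (mat_adjoint X *\<^sub>v y) \<le> \<kappa> * sq_norm y"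
  shows "op_norm X \<le> sqrt \<kappa>"
proof -
  have XX: "mat_adjoint X * X \<in> carrier_mat n n" using X by (metis mat_adjoint_carrier mult_carrier_mat)
  have "finite (Re ` spectrum (mat_adjoint X * X))"
    using card_finite_spectrum(1)[OF XX] by simp
  moreover have "Re ` spectrum (mat_adjoint X * X) \<noteq> {}"
    using spectrum_non_empty[OF XX n] by simp
  ultimately have "Max (Re ` spectrum (mat_adjoint X * X)) \<le> \<kappa>"
    using spectrum_adjoint_mult_le[OF X \<kappa> bound] by (simp add: Max_le_iff)
  then show ?thesis unfolding op_norm_def by simp
qed

lemma order_prod_linear:
  fixes c :: "nat \<Rightarrow> 'a :: idom"
  shows "order x (\<Prod>i<n. [:- c i, 1:]) = card {i. i < n \<and> c i = x}"
proof (induction n)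
  case 0
  then show ?case by (simp add: order_0I)
next
  case (Suc n)
  have "order x (\<Prod>i<Suc n. [:- c i, 1:]) = order x ((\<Prod>i<n. [:- c i, 1:]) * [:- c n, 1:])"
    by simp
  also have "\<dots> = order x (\<Prod>i<n. [:- c i, 1:]) + order x [:- c n, 1:]"
  proof (rule order_mult)
    have "(\<Prod>i<n. [:- c i, 1:]) \<noteq> 0" by (auto simp: prod_zero_iff)
    then show "(\<Prod>i<n. [:- c i, 1:]) * [:- c n, 1:] \<noteq> 0"
      by (metis mult_eq_0_iff pCons_eq_0_iff one_neq_zero)
  qed
  also have "\<dots> = card {i. i < n \<and> c i = x} + (if c n = x then 1 else 0)"
    unfolding Suc.IH order_linear' by auto
  also have "\<dots> = card {i. i < Suc n \<and> c i = x}"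
  proof -
    have "{i. i < Suc n \<and> c i = x}
      = (if c n = x then insert n {i. i < n \<and> c i = x} else {i. i < n \<and> c i = x})"
      by (auto simp: less_Suc_eq)
    then show ?thesis by simp
  qed
  finally show ?case .
qed

lemma sum_spectrum_order:
  fixes c :: "nat \<Rightarrow> complex" and f :: "complex \<Rightarrow> real"
  assumes M: "M \<in> carrier_mat n n" and cp: "char_poly M = (\<Prod>i<n. [:- c i, 1:])"
  shows "(\<Sum>e\<in>spectrum M. real (order e (char_poly M)) * f e) = (\<Sum>i<n. f (c i))"
proof -
  have spec: "spectrum M = c ` {..<n}"
    unfolding spectrum_root_char_poly[OF M] cp poly_prod by (auto simp: prod_zero_iff)
  have "(\<Sum>i<n. f (c i)) = (\<Sum>e\<in>c ` {..<n}. \<Sum>i\<in>{i\<in>{..<n}. c i = e}. f (c i))"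
    by (rule sum.image_gen) simp
  also have "\<dots> = (\<Sum>e\<in>c ` {..<n}. real (card {i. i < n \<and> c i = e}) * f e)"
    by (intro sum.cong) auto
  finally show ?thesis unfolding spec cp order_prod_linear by simp
qed

lemma trace_norm_spectral:
  assumes "spectral_decomp n (mat_adjoint X * X) V m"
  shows "trace_norm X = (\<Sum>i<n. sqrt (m i))"
  unfolding trace_norm_def
  using sum_spectrum_order[OF spectral_decompD(5)[OF assms] spectral_decomp_char_poly[OF assms],
      of "\<lambda>e. sqrt (Re e)"]
  by simp

lemma mat_trace_mult_comm:
  fixes A B :: "complex mat"
  assumes A: "A \<in> carrier_mat n m" and B: "B \<in> carrier_mat m n"
  shows "mat_trace (A * B) = mat_trace (B * A)"
proof -
  have "mat_trace (A * B) = (\<Sum>i<n. \<Sum>k<m. A $$ (i, k) * B $$ (k, i))"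
    unfolding mat_trace_def using A B by (simp add: scalar_prod_def lessThan_atLeast0)
  also have "\<dots> = (\<Sum>k<m. \<Sum>i<n. B $$ (k, i) * A $$ (i, k))"
    by (subst sum.swap) (simp add: mult.commute)
  also have "\<dots> = mat_trace (B * A)"
    unfolding mat_trace_def using A B by (simp add: scalar_prod_def lessThan_atLeast0)
  finally show ?thesis .
qed

lemma mat_trace_minus:
  assumes "A \<in> carrier_mat n n" "B \<in> carrier_mat n n"
  shows "mat_trace (A - B) = mat_trace A - mat_trace B"
  unfolding mat_trace_def using assms by (simp add: sum_subtractf)

lemma mat_trace_real_diag_mat: "mat_trace (real_diag_mat n d) = complex_of_real (\<Sum>i<n. d i)"
  unfolding mat_trace_def by simp

lemma mat_trace_unitary_conj:
  assumes V: "unitary_mat n V" and G: "G \<in> carrier_mat n n"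
  shows "mat_trace (mat_adjoint V * G * V) = mat_trace G"
proof -
  have Vc: "V \<in> carrier_mat n n" and VV: "V * mat_adjoint V = 1\<^sub>m n"
    using V unfolding unitary_mat_def by auto
  have "mat_trace (mat_adjoint V * G * V) = mat_trace (mat_adjoint V * (G * V))"
    using Vc G by (simp add: assoc_mult_mat[of _ n n _ n _ n])
  also have "\<dots> = mat_trace (G * V * mat_adjoint V)"
    using Vc G by (intro mat_trace_mult_comm[of _ n n]) auto
  also have "\<dots> = mat_trace G"
    using Vc G VV by (simp add: assoc_mult_mat[of _ n n _ n _ n])
  finally show ?thesis .
qed

lemma mat_trace_conj_quad_form:
  fixes R G :: "complex mat"
  assumes R: "R \<in> carrier_mat n n" and G: "G \<in> carrier_mat n n"
  shows "mat_trace (mat_adjoint R * G * R) = (\<Sum>j<n. quad_form G (col R j))"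
proof -
  have "mat_trace (mat_adjoint R * G * R) = (\<Sum>j<n. (mat_adjoint R * (G * R)) $$ (j, j))"
    unfolding mat_trace_def using R G by (simp add: assoc_mult_mat[of _ n n _ n _ n])
  also have "\<dots> = (\<Sum>j<n. quad_form G (col R j))"
  proof (rule sum.cong[OF refl])
    fix j assume "j \<in> {..<n}"
    then have j: "j < n" by simp
    have "(mat_adjoint R * (G * R)) $$ (j, j) = row (mat_adjoint R) j \<bullet> col (G * R) j"
      using R G j by simp
    also have "\<dots> = conjugate (col R j) \<bullet> (G *\<^sub>v col R j)"
      unfolding col_mult2[OF G R j] using R j by (simp add: row_mat_adjoint)
    finally show "(mat_adjoint R * (G * R)) $$ (j, j) = quad_form G (col R j)"
      unfolding quad_form_def .
  qed
  finally show ?thesis .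
qed

lemma mat_trace_adjoint_mult:
  fixes P Q :: "complex mat"
  assumes "P \<in> carrier_mat n n" "Q \<in> carrier_mat n n"
  shows "mat_trace (mat_adjoint P * Q) = (\<Sum>j<n. \<Sum>i<n. cnj (P $$ (i, j)) * Q $$ (i, j))"
  unfolding mat_trace_def using assms by (simp add: scalar_prod_def lessThan_atLeast0)

lemma mat_trace_adjoint_mult_self:
  fixes P :: "complex mat"
  assumes "P \<in> carrier_mat n n"
  shows "Re (mat_trace (mat_adjoint P * P)) = (\<Sum>j<n. \<Sum>i<n. (cmod (P $$ (i, j)))\<^sup>2)"
  unfolding mat_trace_adjoint_mult[OF assms assms] Re_sum
  by (simp add: complex_norm_square[symmetric] mult.commute)

lemma mat_trace_adjoint_mult_self_nonneg:
  fixes P :: "complex mat"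
  assumes "P \<in> carrier_mat n n"
  shows "Re (mat_trace (mat_adjoint P * P)) \<ge> 0"
  unfolding mat_trace_adjoint_mult_self[OF assms] by (simp add: sum_nonneg)

lemma mat_trace_adjoint_mult_amgm:
  fixes P Q :: "complex mat"
  assumes P: "P \<in> carrier_mat n n" and Q: "Q \<in> carrier_mat n n" and t: "t > 0"
  shows "2 * Re (mat_trace (mat_adjoint P * Q))
    \<le> t * Re (mat_trace (mat_adjoint P * P)) + Re (mat_trace (mat_adjoint Q * Q)) / t"
proof -
  have amgm: "2 * Re (cnj x * y) \<le> t * (cmod x)\<^sup>2 + (cmod y)\<^sup>2 / t" for x y :: complex
  proof -
    have "0 \<le> ((t * Re x - Re y)\<^sup>2 + (t * Im x - Im y)\<^sup>2) / t" using t by simp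
    also have "\<dots> = t * (cmod x)\<^sup>2 + (cmod y)\<^sup>2 / t - 2 * Re (cnj x * y)"
      unfolding cmod_power2 using t by (simp add: field_simps power2_eq_square)
    finally show ?thesis by simp
  qed
  have "2 * Re (mat_trace (mat_adjoint P * Q)) = (\<Sum>j<n. \<Sum>i<n. 2 * Re (cnj (P $$ (i, j)) * Q $$ (i, j)))"
    unfolding mat_trace_adjoint_mult[OF P Q] by (simp add: Re_sum sum_distrib_left)
  also have "\<dots> \<le> (\<Sum>j<n. \<Sum>i<n. t * (cmod (P $$ (i, j)))\<^sup>2 + (cmod (Q $$ (i, j)))\<^sup>2 / t)"
    by (intro sum_mono amgm)
  also have "\<dots> = t * Re (mat_trace (mat_adjoint P * P)) + Re (mat_trace (mat_adjoint Q * Q)) / t"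
    unfolding mat_trace_adjoint_mult_self[OF P] mat_trace_adjoint_mult_self[OF Q]
    by (simp add: sum.distrib sum_distrib_left sum_divide_distrib)
  finally show ?thesis .
qed

lemma partial_isometry_complement_projection:
  fixes P :: "complex mat"
  assumes P: "P \<in> carrier_mat n n" and PP: "P * mat_adjoint P * P = P"
  defines "Q \<equiv> 1\<^sub>m n - P * mat_adjoint P"
  shows "Q \<in> carrier_mat n n" "mat_adjoint Q = Q" "Q * Q = Q"
proof -
  have PP': "P * mat_adjoint P \<in> carrier_mat n n" using P by (metis mat_adjoint_carrier mult_carrier_mat)
  show Q: "Q \<in> carrier_mat n n" unfolding Q_def using PP' by (rule minus_carrier_mat)
  have "P * mat_adjoint P * (P * mat_adjoint P) = (P * mat_adjoint P * P) * mat_adjoint P"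
    using P by (simp add: assoc_mult_mat[of _ n n _ n _ n] mult_carrier_mat[of _ n n])
  then have idem: "P * mat_adjoint P * (P * mat_adjoint P) = P * mat_adjoint P"
    unfolding PP .
  show "mat_adjoint Q = Q"
    unfolding Q_def using P PP' by (simp add: mat_adjoint_minus[of _ n n] mat_adjoint_mult[of P n n _ n])
  have "Q * Q = 1\<^sub>m n * Q - P * mat_adjoint P * Q"
    unfolding Q_def by (rule minus_mult_distrib_mat[OF one_carrier_mat PP']) (use Q Q_def in auto)
  also have "P * mat_adjoint P * Q = 0\<^sub>m n n"
    unfolding Q_def using PP' idem
    by (simp add: mult_minus_distrib_mat[OF PP' one_carrier_mat PP'] right_mult_one_mat[OF PP'])
  also have "1\<^sub>m n * Q - 0\<^sub>m n n = Q" using Q by (intro eq_matI) auto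
  finally show "Q * Q = Q" .
qed

text \<open>\<open>P P\<^sup>*\<close> is an orthogonal projection, so \<open>Tr (R P)\<^sup>* R P = Tr R P P\<^sup>* R\<^sup>* \<le> Tr R R\<^sup>*\<close>.\<close>

lemma frobenius_mult_partial_isometry_le:
  fixes R P :: "complex mat"
  assumes R: "R \<in> carrier_mat n n" and P: "P \<in> carrier_mat n n"
    and PP: "P * mat_adjoint P * P = P"
  shows "Re (mat_trace (mat_adjoint (R * P) * (R * P))) \<le> Re (mat_trace (mat_adjoint R * R))"
proof -
  define Q where "Q = 1\<^sub>m n - P * mat_adjoint P"
  note Q = partial_isometry_complement_projection[OF P PP, folded Q_def]
  have PP': "P * mat_adjoint P \<in> carrier_mat n n" using P by (metis mat_adjoint_carrier mult_carrier_mat)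
  have RR: "mat_adjoint R * R \<in> carrier_mat n n" using R by (metis mat_adjoint_carrier mult_carrier_mat)
  have "mat_trace (mat_adjoint (R * P) * (R * P)) = mat_trace (mat_adjoint P * (mat_adjoint R * R * P))"
    using R P by (simp add: mat_adjoint_mult[of R n n P n] assoc_mult_mat[of _ n n _ n _ n]
        mult_carrier_mat[of _ n n])
  also have "\<dots> = mat_trace (mat_adjoint R * R * P * mat_adjoint P)"
    using RR P by (intro mat_trace_mult_comm[of _ n n]) (auto intro: mult_carrier_mat)
  also have "\<dots> = mat_trace (mat_adjoint R * R) - mat_trace (mat_adjoint R * R * Q)"
  proof -
    have "mat_adjoint R * R * Q = mat_adjoint R * R - mat_adjoint R * R * (P * mat_adjoint P)"
      unfolding Q_def using RR PP'
      by (simp add: mult_minus_distrib_mat[OF RR one_carrier_mat PP'] right_mult_one_mat[OF RR])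
    moreover have "mat_adjoint R * R * P * mat_adjoint P = mat_adjoint R * R * (P * mat_adjoint P)"
      using RR P by (intro assoc_mult_mat[of _ n n _ n _ n]) auto
    ultimately show ?thesis
      using RR PP' by (simp add: mat_trace_minus[of _ n])
  qed
  also have "mat_trace (mat_adjoint R * R * Q) = mat_trace (mat_adjoint (R * Q) * (R * Q))"
  proof -
    have "mat_trace (mat_adjoint R * R * Q) = mat_trace (mat_adjoint R * R * (Q * Q))"
      unfolding Q(3) ..
    also have "\<dots> = mat_trace (mat_adjoint R * R * Q * Q)"
      using RR Q(1) by (simp add: assoc_mult_mat[of _ n n _ n _ n])
    also have "\<dots> = mat_trace (Q * (mat_adjoint R * R * Q))"
      using RR Q(1) by (intro mat_trace_mult_comm[of _ n n]) (auto intro: mult_carrier_mat)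
    also have "\<dots> = mat_trace (mat_adjoint (R * Q) * (R * Q))"
      using R Q(1) by (simp add: mat_adjoint_mult[of R n n Q n] Q(2) assoc_mult_mat[of _ n n _ n _ n]
          mult_carrier_mat[of _ n n])
    finally show ?thesis .
  qed
  finally show ?thesis
    using mat_trace_adjoint_mult_self_nonneg[of "R * Q" n] R Q(1) by simp
qed

text \<open>The witness is \<open>P = X V D\<close>, where \<open>D\<close> inverts the nonzero singular values \<open>\<surd>m i\<close>
  and vanishes elsewhere.\<close>

lemma partial_isometry_polar:
  fixes X :: "complex mat"
  assumes X: "X \<in> carrier_mat n n" and sd: "spectral_decomp n (mat_adjoint X * X) V m"
  shows "\<exists>P. P \<in> carrier_mat n n \<and> P * mat_adjoint P * P = P
    \<and> mat_adjoint P * X * V = real_diag_mat n (\<lambda>i. sqrt (m i))"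
proof -
  note sdD = spectral_decompD[OF sd]
  have V: "V \<in> carrier_mat n n" by (fact sdD(1))
  have m: "m i \<ge> 0" if i: "i < n" for i
  proof -
    have "complex_of_real (m i) = quad_form (mat_adjoint X * X) (col V i)"
      using spectral_decomp_quad_form_col[OF sd i] by simp
    also have "\<dots> = complex_of_real (sq_norm (X *\<^sub>v col V i))"
      using quad_form_adjoint_mult[OF X, of "col V i"] V i by simp
    finally show ?thesis using sq_norm_nonneg by simp
  qed
  define r where "r i = (if m i = 0 then 0 else 1 / sqrt (m i))" for i
  define P where "P = X * V * real_diag_mat n r"
  have P: "P \<in> carrier_mat n n" unfolding P_def using X V by (metis mult_carrier_mat real_diag_mat_carrier)
  have adjP: "mat_adjoint P = real_diag_mat n r * (mat_adjoint V * mat_adjoint X)"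
    unfolding P_def using X V
    by (simp add: mat_adjoint_mult[of _ n n _ n] mult_carrier_mat[of _ n n])
  have VMV: "mat_adjoint V * (mat_adjoint X * X) * V = real_diag_mat n m"
    by (rule spectral_decomp_diag[OF sd])
  have "mat_adjoint P * X * V = real_diag_mat n r * (mat_adjoint V * (mat_adjoint X * X) * V)"
    unfolding adjP using X V by (simp add: assoc_mult_mat[of _ n n _ n _ n] mult_carrier_mat[of _ n n])
  also have "\<dots> = real_diag_mat n (\<lambda>i. sqrt (m i))"
    unfolding VMV real_diag_mat_mult
    by (rule real_diag_mat_cong) (simp add: r_def m real_div_sqrt)
  finally have PXV: "mat_adjoint P * X * V = real_diag_mat n (\<lambda>i. sqrt (m i))" .
  have "P * mat_adjoint P * P = X * V * (real_diag_mat n r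
      * (real_diag_mat n r * (mat_adjoint V * (mat_adjoint X * X) * V) * real_diag_mat n r))"
    unfolding adjP unfolding P_def using X V
    by (simp add: assoc_mult_mat[of _ n n _ n _ n] mult_carrier_mat[of _ n n])
  also have "real_diag_mat n r
      * (real_diag_mat n r * (mat_adjoint V * (mat_adjoint X * X) * V) * real_diag_mat n r)
    = real_diag_mat n r"
    unfolding VMV real_diag_mat_mult by (rule real_diag_mat_cong) (simp add: r_def m)
  finally have "P * mat_adjoint P * P = P" unfolding P_def .
  then show ?thesis using P PXV by blast
qed

section \<open>Kantorovich-type bounds\<close>

lemma kantorovich_quadratic_le:
  fixes a b l x :: real
  assumes "a > 0" "b > 0"
  shows "(a + b) * l * x - a * b * x\<^sup>2 \<le> ((a + b) * l)\<^sup>2 / (4 * a * b)"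
proof -
  have "((a + b) * l)\<^sup>2 / (4 * a * b) - ((a + b) * l * x - a * b * x\<^sup>2)
    = ((a + b) * l - 2 * a * b * x)\<^sup>2 / (4 * a * b)"
    using assms by (simp add: field_simps power2_eq_square)
  moreover have "((a + b) * l - 2 * a * b * x)\<^sup>2 / (4 * a * b) \<ge> 0" using assms by simp
  ultimately show ?thesis by linarith
qed

lemma sqrt_kantorovich_bound:
  fixes a b l :: real
  assumes "a > 0" "b > 0"
  shows "sqrt (((a + b) * l)\<^sup>2 / (4 * a * b)) = (a + b) / (2 * sqrt (a * b)) * \<bar>l\<bar>"
proof -
  have "sqrt (((a + b) * l)\<^sup>2 / (4 * a * b)) = \<bar>(a + b) * l\<bar> / (2 * sqrt (a * b))"
    by (simp add: real_sqrt_divide real_sqrt_mult mult.assoc)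
  then show ?thesis using assms by (simp add: abs_mult)
qed

text \<open>The operator inequality \<open>Z\<^sup>2 \<le> (a + b) Z - a b I\<close>: on each eigenvector it reads
  \<open>(a - z) (z - b) \<ge> 0\<close>.\<close>

lemma kantorovich_quad_form:
  fixes a b :: real
  assumes Z: "hermitian_mat n Z" and spec: "\<forall>e\<in>spectrum Z. b \<le> Re e \<and> Re e \<le> a"
    and w: "w \<in> carrier_vec n"
  shows "Re (quad_form (Z * Z) w) \<le> (a + b) * Re (quad_form Z w) - a * b * sq_norm w"
proof -
  obtain U z where sd: "spectral_decomp n Z U z"
    using hermitian_spectral_decomp[OF Z] by blast
  have z: "b \<le> z i \<and> z i \<le> a" if "i < n" for i
    using spec spectral_decomp_eigenvalue[OF sd that] by force
  let ?c = "\<lambda>i. (cmod ((mat_adjoint U *\<^sub>v w) $ i))\<^sup>2"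
  have "Re (quad_form (Z * Z) w) = (\<Sum>i<n. (z i)\<^sup>2 * ?c i)"
    by (rule spectral_decomp_quad_form[OF spectral_decomp_square[OF sd] w])
  also have "\<dots> \<le> (\<Sum>i<n. ((a + b) * z i - a * b) * ?c i)"
  proof (rule sum_mono)
    fix i assume "i \<in> {..<n}"
    then have "0 \<le> (a - z i) * (z i - b)" using z by simp
    then have "(z i)\<^sup>2 \<le> (a + b) * z i - a * b" by (simp add: algebra_simps power2_eq_square)
    then show "(z i)\<^sup>2 * ?c i \<le> ((a + b) * z i - a * b) * ?c i" by (simp add: mult_right_mono)
  qed
  also have "\<dots> = (a + b) * Re (quad_form Z w) - a * b * sq_norm w"
    unfolding spectral_decomp_quad_form[OF sd w] unitary_mat_sq_norm[OF spectral_decompD(6)[OF sd] w]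
    by (simp add: algebra_simps sum_distrib_left sum_subtractf)
  finally show ?thesis .
qed

lemma quad_form_kantorovich_quadratic_le:
  fixes a b l :: real
  assumes A: "hermitian_mat n A" and a: "a > 0" and b: "b > 0" and y: "y \<in> carrier_vec n"
  shows "(a + b) * l * Re (quad_form A y) - a * b * Re (quad_form (A * A) y)
    \<le> ((a + b) * l)\<^sup>2 / (4 * a * b) * sq_norm y"
proof -
  obtain U \<alpha> where sd: "spectral_decomp n A U \<alpha>"
    using hermitian_spectral_decomp[OF A] by blast
  let ?c = "\<lambda>i. (cmod ((mat_adjoint U *\<^sub>v y) $ i))\<^sup>2"
  have "(a + b) * l * Re (quad_form A y) - a * b * Re (quad_form (A * A) y)
    = (\<Sum>i<n. ((a + b) * l * \<alpha> i - a * b * (\<alpha> i)\<^sup>2) * ?c i)"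
    unfolding spectral_decomp_quad_form[OF sd y]
      spectral_decomp_quad_form[OF spectral_decomp_square[OF sd] y]
    by (simp add: algebra_simps sum_distrib_left sum_subtractf)
  also have "\<dots> \<le> (\<Sum>i<n. ((a + b) * l)\<^sup>2 / (4 * a * b) * ?c i)"
    by (intro sum_mono mult_right_mono kantorovich_quadratic_le a b) simp
  also have "\<dots> = ((a + b) * l)\<^sup>2 / (4 * a * b) * sq_norm y"
    unfolding unitary_mat_sq_norm[OF spectral_decompD(6)[OF sd] y] by (simp add: sum_distrib_left)
  finally show ?thesis .
qed

locale kantorovich_setting =
  fixes n :: nat and A Z :: "complex mat" and a b :: real
  assumes n_pos: "n > 0" and psd_A: "psd_mat n A" and hermitian_Z: "hermitian_mat n Z"
    and b_pos: "b > 0" and spectrum_Z: "\<forall>e\<in>spectrum Z. b \<le> Re e \<and> Re e \<le> a"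
begin

lemma A_carrier: "A \<in> carrier_mat n n" and A_adjoint: "mat_adjoint A = A"
  and Z_carrier: "Z \<in> carrier_mat n n" and Z_adjoint: "mat_adjoint Z = Z"
  using psd_A hermitian_Z unfolding psd_mat_def hermitian_mat_def by auto

lemma a_pos: "a > 0"
proof -
  obtain e where "e \<in> spectrum Z" using spectrum_non_empty[OF Z_carrier n_pos] by blast
  then show ?thesis using spectrum_Z b_pos by force
qed

lemma kantorovich_trace:
  assumes R: "R \<in> carrier_mat n n"
  shows "Re (mat_trace (mat_adjoint R * (Z * Z) * R))
    \<le> (a + b) * Re (mat_trace (mat_adjoint R * Z * R)) - a * b * Re (mat_trace (mat_adjoint R * R))"
proof -
  have col: "col R j \<in> carrier_vec n" if "j \<in> {..<n}" for j using R that by auto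
  have "mat_adjoint R * R = mat_adjoint R * 1\<^sub>m n * R" using R by simp
  then have "Re (mat_trace (mat_adjoint R * R)) = (\<Sum>j<n. sq_norm (col R j))"
    using mat_trace_conj_quad_form[OF R one_carrier_mat] col
    by (simp add: Re_sum quad_form_def conjugate_scalar_prod_self)
  moreover have "Re (mat_trace (mat_adjoint R * (Z * Z) * R)) \<le>
    (\<Sum>j<n. (a + b) * Re (quad_form Z (col R j)) - a * b * sq_norm (col R j))"
    unfolding mat_trace_conj_quad_form[OF R mult_carrier_mat[OF Z_carrier Z_carrier]] Re_sum
    by (intro sum_mono kantorovich_quad_form[OF hermitian_Z spectrum_Z] col)
  ultimately show ?thesis
    unfolding mat_trace_conj_quad_form[OF R Z_carrier] Re_sum
    by (simp add: sum_subtractf sum_distrib_left)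
qed

lemma sq_norm_adjoint_mult_le:
  assumes W: "hermitian_mat n W" "W * W = A"
    and l: "\<forall>x\<in>carrier_vec n. Re (quad_form (W * Z * W) x) \<le> l * sq_norm x"
    and y: "y \<in> carrier_vec n"
  shows "sq_norm (mat_adjoint (A * Z) *\<^sub>v y) \<le> ((a + b) * l)\<^sup>2 / (4 * a * b) * sq_norm y"
proof -
  have Wc: "W \<in> carrier_mat n n" and adjW: "mat_adjoint W = W"
    using W unfolding hermitian_mat_def by auto
  note Ac = A_carrier and Zc = Z_carrier
  define w where "w = A *\<^sub>v y"
  have w: "w \<in> carrier_vec n" unfolding w_def using Ac y by simp
  have Wy: "W *\<^sub>v y \<in> carrier_vec n" using Wc y by simp
  have "mat_adjoint (A * Z) *\<^sub>v y = Z *\<^sub>v w"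
    unfolding w_def mat_adjoint_mult[OF Ac Zc] A_adjoint Z_adjoint using Ac Zc y by simp
  then have "sq_norm (mat_adjoint (A * Z) *\<^sub>v y) = Re (quad_form (Z * Z) w)"
    using quad_form_adjoint_mult[OF Zc w] Z_adjoint by simp
  also have "\<dots> \<le> (a + b) * Re (quad_form Z w) - a * b * sq_norm w"
    by (rule kantorovich_quad_form[OF hermitian_Z spectrum_Z w])
  also have "Re (quad_form Z w) \<le> l * Re (quad_form A y)"
  proof -
    have "A *\<^sub>v y = W *\<^sub>v (W *\<^sub>v y)"
      unfolding W(2)[symmetric] using Wc y by (intro assoc_mult_mat_vec) auto
    then have "quad_form Z w = quad_form (W * Z * W) (W *\<^sub>v y)"
      unfolding w_def using quad_form_conj[OF Wc Zc Wy] adjW by simp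
    moreover have "complex_of_real (sq_norm (W *\<^sub>v y)) = quad_form A y"
      using quad_form_adjoint_mult[OF Wc y] adjW W(2) by simp
    ultimately show ?thesis using l Wy by (metis Re_complex_of_real)
  qed
  also have "sq_norm w = Re (quad_form (A * A) y)"
    unfolding w_def using quad_form_adjoint_mult[OF Ac y] A_adjoint by simp
  finally have "sq_norm (mat_adjoint (A * Z) *\<^sub>v y)
    \<le> (a + b) * (l * Re (quad_form A y)) - a * b * Re (quad_form (A * A) y)"
    using a_pos b_pos by (simp add: mult_left_mono)
  also have "\<dots> \<le> ((a + b) * l)\<^sup>2 / (4 * a * b) * sq_norm y"
    using quad_form_kantorovich_quadratic_le[OF _ a_pos b_pos y, of A l] psd_A
    by (simp add: psd_mat_def algebra_simps)
  finally show ?thesis .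
qed

theorem op_norm_mult_le:
  "op_norm (A * Z) \<le> (a + b) / (2 * sqrt (a * b)) * spectral_radius (A * Z)"
proof -
  note Ac = A_carrier and Zc = Z_carrier and a = a_pos
  obtain W where W: "hermitian_mat n W" "W * W = A" using psd_mat_sqrt[OF psd_A] by blast
  have Wc: "W \<in> carrier_mat n n" and adjW: "mat_adjoint W = W"
    using W(1) unfolding hermitian_mat_def by auto
  have "hermitian_mat n (W * Z * W)" using hermitian_mat_conj[OF Wc hermitian_Z] adjW by simp
  then obtain l where l_spec: "complex_of_real l \<in> spectrum (W * Z * W)"
    and l: "\<forall>x\<in>carrier_vec n. Re (quad_form (W * Z * W) x) \<le> l * sq_norm x"
    using hermitian_quad_form_le_eigenvalue n_pos by blast
  have AZ: "A * Z \<in> carrier_mat n n" using Ac Zc by simp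
  have l_rho: "\<bar>l\<bar> \<le> spectral_radius (A * Z)"
  proof (cases "l = 0")
    case True
    then show ?thesis using spectral_radius_mem_max(1)[OF AZ n_pos] by auto
  next
    case False
    have "complex_of_real l \<in> spectrum (W * (W * Z))"
      using spectrum_mult_swap[of "W * Z" n W] l_spec False Wc Zc by auto
    moreover have "W * (W * Z) = A * Z"
      using W(2) Wc Zc by (simp add: assoc_mult_mat[of _ n n _ n _ n, symmetric])
    ultimately have "complex_of_real l \<in> spectrum (A * Z)" by simp
    then have "norm (complex_of_real l) \<in> norm ` spectrum (A * Z)" by (rule imageI)
    then show ?thesis using spectral_radius_mem_max(2)[OF AZ n_pos] by simp
  qed
  have "0 \<le> ((a + b) * l)\<^sup>2 / (4 * a * b)" using a b_pos by simp
  from op_norm_le_sqrt[OF AZ n_pos this sq_norm_adjoint_mult_le[OF W l]]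
  have "op_norm (A * Z) \<le> sqrt (((a + b) * l)\<^sup>2 / (4 * a * b))" .
  also have "\<dots> = (a + b) / (2 * sqrt (a * b)) * \<bar>l\<bar>"
    by (rule sqrt_kantorovich_bound[OF a b_pos])
  also have "\<dots> \<le> (a + b) / (2 * sqrt (a * b)) * spectral_radius (A * Z)"
    using l_rho a b_pos by (intro mult_left_mono) auto
  finally show ?thesis .
qed

lemma frobenius_mult_le:
  assumes W: "hermitian_mat n W" "W * W = A" and V: "unitary_mat n V"
  shows "Re (mat_trace (mat_adjoint (W * Z * V) * (W * Z * V)))
    \<le> (a + b) * Re (mat_trace (A * Z)) - a * b * Re (mat_trace A)"
proof -
  note Ac = A_carrier and Zc = Z_carrier
  have Wc: "W \<in> carrier_mat n n" and adjW: "mat_adjoint W = W"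
    using W(1) unfolding hermitian_mat_def by auto
  have Vc: "V \<in> carrier_mat n n" using V unfolding unitary_mat_def by auto
  have "mat_adjoint (W * Z * V) = mat_adjoint V * (Z * W)"
    using Wc Zc Vc
    by (simp add: mat_adjoint_mult[of _ n n _ n] adjW Z_adjoint assoc_mult_mat[of _ n n _ n _ n])
  then have "mat_trace (mat_adjoint (W * Z * V) * (W * Z * V))
    = mat_trace (mat_adjoint V * ((Z * W) * (W * Z)) * V)"
    using Wc Zc Vc by (simp add: assoc_mult_mat[of _ n n _ n _ n] mult_carrier_mat[of _ n n])
  also have "\<dots> = mat_trace ((Z * W) * (W * Z))"
    using Wc Zc by (intro mat_trace_unitary_conj[OF V]) auto
  also have "\<dots> = mat_trace ((W * Z) * (Z * W))"
    using Wc Zc by (intro mat_trace_mult_comm[of _ n n]) auto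
  also have "\<dots> = mat_trace (mat_adjoint W * (Z * Z) * W)"
    using Wc Zc by (simp add: adjW assoc_mult_mat[of _ n n _ n _ n] mult_carrier_mat[of _ n n])
  finally have "Re (mat_trace (mat_adjoint (W * Z * V) * (W * Z * V)))
    \<le> (a + b) * Re (mat_trace (mat_adjoint W * Z * W)) - a * b * Re (mat_trace (mat_adjoint W * W))"
    using kantorovich_trace[OF Wc] by simp
  moreover have "mat_trace (mat_adjoint W * Z * W) = mat_trace (A * Z)"
  proof -
    have "mat_trace (mat_adjoint W * Z * W) = mat_trace (W * (Z * W))"
      using Wc Zc by (simp add: adjW assoc_mult_mat[of _ n n _ n _ n])
    also have "\<dots> = mat_trace ((Z * W) * W)"
      using Wc Zc by (intro mat_trace_mult_comm[of _ n n]) auto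
    also have "\<dots> = mat_trace (Z * A)"
      using Wc Zc W(2) by (simp add: assoc_mult_mat[of _ n n _ n _ n])
    also have "\<dots> = mat_trace (A * Z)"
      using Ac Zc by (intro mat_trace_mult_comm[of _ n n]) auto
    finally show ?thesis .
  qed
  ultimately show ?thesis using W(2) adjW by simp
qed

theorem trace_norm_mult_le:
  "trace_norm (A * Z) \<le> (a + b) / (2 * sqrt (a * b)) * Re (mat_trace (A * Z))"
proof -
  note Ac = A_carrier and Zc = Z_carrier and a = a_pos
  obtain W where W: "hermitian_mat n W" "W * W = A" using psd_mat_sqrt[OF psd_A] by blast
  have Wc: "W \<in> carrier_mat n n" and adjW: "mat_adjoint W = W"
    using W(1) unfolding hermitian_mat_def by auto
  define X where "X = A * Z"
  have X: "X \<in> carrier_mat n n" unfolding X_def using Ac Zc by simp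
  have "hermitian_mat n (mat_adjoint X * X)"
    using hermitian_mat_conj[OF X, of "1\<^sub>m n"] X by (simp add: hermitian_mat_def)
  then obtain V m where sd: "spectral_decomp n (mat_adjoint X * X) V m"
    using hermitian_spectral_decomp by blast
  have V: "unitary_mat n V" and Vc: "V \<in> carrier_mat n n"
    using spectral_decompD[OF sd] by auto
  obtain P where Pc: "P \<in> carrier_mat n n" and PP: "P * mat_adjoint P * P = P"
    and PXV: "mat_adjoint P * X * V = real_diag_mat n (\<lambda>i. sqrt (m i))"
    using partial_isometry_polar[OF X sd] by blast
  have "mat_adjoint (W * P) * (W * Z * V) = mat_adjoint P * X * V"
    unfolding X_def W(2)[symmetric] using Wc Pc Zc Vc
    by (simp add: mat_adjoint_mult[of W n n P n] adjW assoc_mult_mat[of _ n n _ n _ n]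
        mult_carrier_mat[of _ n n])
  then have tn: "trace_norm X = Re (mat_trace (mat_adjoint (W * P) * (W * Z * V)))"
    unfolding trace_norm_spectral[OF sd] by (simp add: PXV mat_trace_real_diag_mat)
  define s where "s = sqrt (a * b)"
  have s: "s > 0" "s * s = a * b" unfolding s_def using a b_pos by auto
  have WP: "W * P \<in> carrier_mat n n" and WZV: "W * Z * V \<in> carrier_mat n n"
    using Wc Pc Zc Vc by auto
  have "2 * trace_norm X \<le> s * Re (mat_trace (mat_adjoint (W * P) * (W * P)))
      + Re (mat_trace (mat_adjoint (W * Z * V) * (W * Z * V))) / s"
    unfolding tn by (rule mat_trace_adjoint_mult_amgm[OF WP WZV s(1)])
  also have "\<dots> \<le> s * Re (mat_trace A) + ((a + b) * Re (mat_trace X) - a * b * Re (mat_trace A)) / s"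
  proof (intro add_mono mult_left_mono divide_right_mono)
    show "Re (mat_trace (mat_adjoint (W * P) * (W * P))) \<le> Re (mat_trace A)"
      using frobenius_mult_partial_isometry_le[OF Wc Pc PP] adjW W(2) by simp
    show "Re (mat_trace (mat_adjoint (W * Z * V) * (W * Z * V)))
      \<le> (a + b) * Re (mat_trace X) - a * b * Re (mat_trace A)"
      unfolding X_def by (rule frobenius_mult_le[OF W V])
  qed (use s in auto)
  also have "\<dots> = (a + b) * Re (mat_trace X) / s"
    using s by (simp add: field_simps)
  finally show ?thesis using s unfolding X_def s_def[symmetric] by (simp add: field_simps)
qed

end

theorem corollary1p4:
  fixes n :: nat and A Z :: "complex mat" and a b :: real
  assumes "n > 0"
    and "A \<in> carrier_mat n n" and "Z \<in> carrier_mat n n"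
    and "psd_mat n A" and "pd_mat n Z"
    and "a = Max (Re ` spectrum Z)" and "b = Min (Re ` spectrum Z)"
  shows "op_norm (A * Z) \<le> (a + b) / (2 * sqrt (a * b)) * spectral_radius (A * Z) \<and>
         trace_norm (A * Z) \<le> (a + b) / (2 * sqrt (a * b)) * Re (mat_trace (A * Z))"
proof -
  have hermitian_Z: "hermitian_mat n Z" using \<open>pd_mat n Z\<close> unfolding pd_mat_def by blast
  have fin: "finite (Re ` spectrum Z)"
    using card_finite_spectrum(1)[OF \<open>Z \<in> carrier_mat n n\<close>] by simp
  have "Re ` spectrum Z \<noteq> {}"
    using spectrum_non_empty[OF \<open>Z \<in> carrier_mat n n\<close> \<open>n > 0\<close>] by simp
  then have "b \<in> Re ` spectrum Z" unfolding \<open>b = _\<close> using fin by (rule Min_in[rotated])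
  then have b_pos: "b > 0" using pd_mat_spectrum_pos[OF \<open>pd_mat n Z\<close>] by auto
  have "\<forall>e\<in>spectrum Z. b \<le> Re e \<and> Re e \<le> a"
    unfolding \<open>a = _\<close> \<open>b = _\<close> using fin by auto
  then interpret kantorovich_setting n A Z a b
    using \<open>n > 0\<close> \<open>psd_mat n A\<close> hermitian_Z b_pos by unfold_locales
  show ?thesis using op_norm_mult_le trace_norm_mult_le by blast
qed

end
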